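(* For every $k$ for which the quantities in the context are defined (i.e. $k\le k_{\max}$), $h(v^{(k)})=\min\{h(v): v\in n_0+\mathcal K_k(PAP,b_0),\ \|v\|=1\}$.
   Context: Let $A\in\mathbb{R}^{n\times n}$ be symmetric, $C\in\mathbb{R}^{n\times m}$ ($m<n$) full column rank, $b\in\mathbb{R}^m$, $n_0=C(C^{\top}C)^{-1}b$ with $\|n_0\|<1$, $\gamma=\sqrt{1-\|n_0\|^2}$, $P=I-C(C^{\top}C)^{-1}C^{\top}$ (orthogonal projector onto $\mathcal N(C^{\top})$), $b_0=PAn_0\neq0$, $h(v)=v^{\top}Av$. $\mathcal K_k(PAP,b_0)=\operatorname{span}\{b_0,PAPb_0,\dots,(PAP)^{k-1}b_0\}$. Lanczos process: with $M=PAP$, $q_0=0$, $\beta_1=\|b_0\|$, $q_1=b_0/\|b_0\|$, for $j=1,2,\dots$: $\alpha_j=q_j^{\top}Mq_j$, $\widehat q_{j+1}=Mq_j-\alpha_jq_j-\beta_jq_{j-1}$, $\beta_{j+1}=\|\widehat q_{j+1}\|$, and if $\beta_{j+1}>0$, $q_{j+1}=\widehat q_{j+1}/\beta_{j+1}$; $k_{\max}$ is the smallest $k$ with $\beta_{k+1}=0$. $Q_k=[q_1,\dots,q_k]$ has orthonormal columns spanning $\mathcal K_k(PAP,b_0)$ and $T_k=Q_k^{\top}PAPQ_k$ is tridiagonal. rLGopt: minimize $\lambda$ over $(\lambda,x)\in\mathbb{R}\times\mathbb{R}^k$ with $(T_k-\lambda I)x=-\|b_0\|e_1$ and $\|x\|=\gamma$;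 $(\mu^{(k)},x^{(k)})$ is its minimizer, and $v^{(k)}=n_0+Q_kx^{(k)}$. *)

theory Defs
  imports "HOL-Analysis.Analysis"
begin

definition n0vec :: "real^'m^'n \<Rightarrow> real^'m \<Rightarrow> real^'n" where
  "n0vec C b = C *v (matrix_inv (transpose C ** C) *v b)"

definition gam :: "real^'m^'n \<Rightarrow> real^'m \<Rightarrow> real" where
  "gam C b = sqrt (1 - (norm (n0vec C b))\<^sup>2)"

definition projP :: "real^'m^'n \<Rightarrow> real^'n^'n" where
  "projP C = mat 1 - C ** matrix_inv (transpose C ** C) ** transpose C"

definition b0vec :: "real^'n^'n \<Rightarrow> real^'m^'n \<Rightarrow> real^'m \<Rightarrow> real^'n" where
  "b0vec A C b = projP C *v (A *v n0vec C b)"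

definition hq :: "real^'n^'n \<Rightarrow> real^'n \<Rightarrow> real" where
  "hq A v = v \<bullet> (A *v v)"

definition krylov :: "real^'n^'n \<Rightarrow> real^'n \<Rightarrow> nat \<Rightarrow> (real^'n) set" where
  "krylov M r k = span ((\<lambda>j. (((*v) M) ^^ j) r) ` {..<k})"

text \<open>Lanczos process: lanczos_step M r j = (q_j, q_(j+1), beta_(j+1)).\<close>
fun lanczos_step :: "real^'n^'n \<Rightarrow> real^'n \<Rightarrow> nat \<Rightarrow> (real^'n) \<times> (real^'n) \<times> real" where
  "lanczos_step M r 0 = (0, (1 / norm r) *\<^sub>R r, norm r)"
| "lanczos_step M r (Suc j) =
     (let (qp, q, \<beta>) = lanczos_step M r j;
          \<alpha> = q \<bullet> (M *v q);
          qh = M *v q - \<alpha> *\<^sub>R q - \<beta> *\<^sub>R qp;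
          \<beta>' = norm qh
      in (q, (1 / \<beta>') *\<^sub>R qh, \<beta>'))"

fun lq :: "real^'n^'n \<Rightarrow> real^'n \<Rightarrow> nat \<Rightarrow> real^'n" where
  "lq M r 0 = 0"
| "lq M r (Suc j) = fst (snd (lanczos_step M r j))"

fun lbeta :: "real^'n^'n \<Rightarrow> real^'n \<Rightarrow> nat \<Rightarrow> real" where
  "lbeta M r 0 = 0"
| "lbeta M r (Suc j) = snd (snd (lanczos_step M r j))"

definition kmax :: "real^'n^'n \<Rightarrow> real^'n \<Rightarrow> nat" where
  "kmax M r = (LEAST k. lbeta M r (Suc k) = 0)"

text \<open>Q_k x = sum_{j=1..k} x_j q_j, for x in R^k represented by its coordinates x 1, ..., x k\<close>
definition Qmul :: "real^'n^'n \<Rightarrow> real^'n \<Rightarrow> nat \<Rightarrow> (nat \<Rightarrow> real) \<Rightarrow> real^'n" where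
  "Qmul M r k x = (\<Sum>j=1..k. x j *\<^sub>R lq M r j)"

text \<open>T_k = Q_k^T M Q_k, entry (i,j) = q_i^T M q_j for 1 <= i,j <= k\<close>
definition Tent :: "real^'n^'n \<Rightarrow> real^'n \<Rightarrow> nat \<Rightarrow> nat \<Rightarrow> real" where
  "Tent M r i j = lq M r i \<bullet> (M *v lq M r j)"

definition rLG_feasible :: "real^'n^'n \<Rightarrow> real^'n \<Rightarrow> real \<Rightarrow> nat \<Rightarrow> real \<Rightarrow> (nat \<Rightarrow> real) \<Rightarrow> bool" where
  "rLG_feasible M r g k lam x \<longleftrightarrow>
     (\<forall>i\<in>{1..k}. (\<Sum>j=1..k. Tent M r i j * x j) - lam * x i = - norm r * (if i = 1 then 1 else 0))
     \<and> sqrt (\<Sum>j=1..k. (x j)\<^sup>2) = g"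

definition rLG_minimizer :: "real^'n^'n \<Rightarrow> real^'n \<Rightarrow> real \<Rightarrow> nat \<Rightarrow> real \<Rightarrow> (nat \<Rightarrow> real) \<Rightarrow> bool" where
  "rLG_minimizer M r g k \<mu> x \<longleftrightarrow>
     rLG_feasible M r g k \<mu> x \<and> (\<forall>lam y. rLG_feasible M r g k lam y \<longrightarrow> \<mu> \<le> lam)"

end

theory Submission
  imports Defs
begin

text \<open>
  Write \<open>v = n0 + y\<close> with \<open>y\<close> in the Krylov space \<open>V = K\<^sub>k(PAP, b0)\<close>. Since \<open>P n0 = 0\<close> and
  \<open>P\<close> fixes \<open>V\<close>, the constraint \<open>\<parallel>v\<parallel> = 1\<close> becomes \<open>\<parallel>y\<parallel> = \<gamma>\<close> and
  \<open>h(v) = h(n0) + y\<^sup>T PAP y + 2 y\<^sup>T b0\<close>. So we face a trust-region subproblem on \<open>V\<close>, and in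
  the orthonormal Lanczos basis its Lagrange conditions \<open>(PAP - \<lambda>) y + b0 \<perp> V\<close> are exactly the
  constraints of rLGopt. It remains to show that the Lagrange point \<open>X\<close> with the least multiplier
  \<open>\<mu>\<close> solves the subproblem. A global minimiser exists by compactness; comparing it with its
  reflections in hyperplanes shows that it is a Lagrange point whose multiplier \<open>\<lambda>\<^sup>*\<close> makes
  \<open>PAP - \<lambda>\<^sup>*\<close> positive semidefinite on \<open>V\<close>. Finally, for every feasible \<open>w\<close> the gap
  \<open>h(n0 + w) - h(n0 + X)\<close> equals \<open>(w - X)\<^sup>T (PAP - \<mu>) (w - X)\<close>, which is nonnegative as
  \<open>\<mu> \<le> \<lambda>\<^sup>*\<close>.
\<close>

declare transpose_matrix_vector [simp del]

section \<open>The projector \<open>P\<close>\<close>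

lemma inner_matrix_vector_transpose:
  fixes A :: "real^'m^'n"
  shows "(A *v u) \<bullet> v = u \<bullet> (transpose A *v v)"
  by (metis dot_lmul_matrix transpose_matrix_vector transpose_transpose)

lemma matrix_symmetric_inner:
  fixes A :: "real^'n^'n"
  assumes "transpose A = A"
  shows "(A *v u) \<bullet> v = u \<bullet> (A *v v)"
  using inner_matrix_vector_transpose[of A u v] assms by simp

lemma matrix_mul_matrix_inv:
  fixes B :: "real^'n^'n"
  assumes "invertible B"
  shows "B ** matrix_inv B = mat 1"
proof -
  have "\<exists>B'. B ** B' = mat 1 \<and> B' ** B = mat 1"
    using assms by (simp add: invertible_def)
  then have "B ** matrix_inv B = mat 1 \<and> matrix_inv B ** B = mat 1"
    unfolding matrix_inv_def by (rule someI_ex)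
  then show ?thesis ..
qed

lemma transpose_matrix_inv_symmetric:
  fixes B :: "real^'n^'n"
  assumes "invertible B" and "transpose B = B"
  shows "transpose (matrix_inv B) = matrix_inv B"
proof -
  let ?G = "matrix_inv B"
  have "transpose ?G ** B = mat 1"
    using matrix_mul_matrix_inv[OF assms(1)] assms(2)
    by (metis matrix_transpose_mul transpose_mat)
  then have "transpose ?G = transpose ?G ** (B ** ?G)"
    by (simp add: matrix_mul_matrix_inv[OF assms(1)])
  also have "\<dots> = ?G"
    by (simp add: matrix_mul_assoc \<open>transpose ?G ** B = mat 1\<close>)
  finally show ?thesis .
qed

lemma gram_invertible:
  fixes C :: "real^'m^'n"
  assumes "rank C = CARD('m)"
  shows "invertible (transpose C ** C)"
proof -
  have "v = 0" if "(transpose C ** C) *v v = 0" for v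
  proof -
    have "(C *v v) \<bullet> (C *v v) = v \<bullet> ((transpose C ** C) *v v)"
      by (simp add: inner_matrix_vector_transpose flip: matrix_vector_mul_assoc)
    then have "C *v v = C *v 0" using that by simp
    then show "v = 0"
      using assms full_rank_injective by (metis injD)
  qed
  then show ?thesis
    using invertible_left_inverse matrix_left_invertible_ker by blast
qed

context
  fixes C :: "real^'m^'n"
  assumes rank: "rank C = CARD('m)"
begin

private abbreviation "G \<equiv> matrix_inv (transpose C ** C)"

private lemma gram_inv_apply: "transpose C *v (C *v (G *v u)) = u"
  using matrix_mul_matrix_inv[OF gram_invertible[OF rank]]
  by (metis matrix_vector_mul_assoc matrix_vector_mul_lid)

private lemma projP_apply: "projP C *v v = v - C *v (G *v (transpose C *v v))"
  by (simp add: projP_def matrix_vector_mult_diff_rdistrib flip: matrix_vector_mul_assoc)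

lemma transpose_mul_projP: "transpose C *v (projP C *v v) = 0"
  by (simp add: projP_apply matrix_vector_mult_diff_distrib gram_inv_apply)

lemma projP_idem: "projP C *v (projP C *v v) = projP C *v v"
  by (subst (1) projP_apply) (simp add: transpose_mul_projP)

lemma projP_symmetric_inner: "(projP C *v u) \<bullet> v = u \<bullet> (projP C *v v)"
proof -
  have "transpose (transpose C ** C) = transpose C ** C"
    by (simp add: matrix_transpose_mul)
  then have G_sym: "(G *v x) \<bullet> y = x \<bullet> (G *v y)" for x y
    by (intro matrix_symmetric_inner transpose_matrix_inv_symmetric gram_invertible rank)
  have "(C *v (G *v (transpose C *v u))) \<bullet> v = (G *v (transpose C *v u)) \<bullet> (transpose C *v v)"
    by (simp add: inner_matrix_vector_transpose)
  also have "\<dots> = u \<bullet> (C *v (G *v (transpose C *v v)))"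
    using inner_matrix_vector_transpose[of "transpose C" u] by (simp add: G_sym)
  finally show ?thesis
    by (simp add: projP_apply inner_diff_left inner_diff_right)
qed

lemma projP_n0vec: "projP C *v n0vec C b = 0"
  by (simp add: projP_apply n0vec_def gram_inv_apply)

end

section \<open>The trust-region subproblem on a subspace\<close>

definition trust_region_objective :: "('a::real_inner \<Rightarrow> 'a) \<Rightarrow> 'a \<Rightarrow> 'a \<Rightarrow> real" where
  "trust_region_objective f r y = y \<bullet> f y + 2 * (y \<bullet> r)"

definition trust_region_stationary ::
    "'a set \<Rightarrow> ('a::real_inner \<Rightarrow> 'a) \<Rightarrow> 'a \<Rightarrow> real \<Rightarrow> real \<Rightarrow> 'a \<Rightarrow> bool" where
  "trust_region_stationary V f r \<gamma> lam y \<longleftrightarrow>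
     y \<in> V \<and> norm y = \<gamma> \<and> (\<forall>z\<in>V. z \<bullet> (f y - lam *\<^sub>R y + r) = 0)"

lemma slope_eq_0_if_bounded_above:
  fixes s p B :: real
  assumes "\<And>t. s + t * p \<le> B"
  shows "p = 0"
proof (rule ccontr)
  assume "p \<noteq> 0"
  then have "s + ((B - s + 1) / p) * p > B" by simp
  then show False using assms by (meson not_le)
qed

lemma nonneg_if_ge_neg_square_multiple:
  fixes c q :: real
  assumes "\<And>s. s > 0 \<Longrightarrow> - (s\<^sup>2 * c) \<le> q"
  shows "0 \<le> q"
proof (rule ccontr)
  assume "\<not> 0 \<le> q"
  moreover have "0 < c" using assms[of 1] \<open>\<not> 0 \<le> q\<close> by simp
  ultimately have "0 < - q / (2 * c)" by (intro divide_pos_pos) auto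
  then have "- ((sqrt (- q / (2 * c)))\<^sup>2 * c) = q / 2" using \<open>0 < c\<close> by simp
  then show False using assms[of "sqrt (- q / (2 * c))"] \<open>0 < - q / (2 * c)\<close> \<open>\<not> 0 \<le> q\<close> by simp
qed

lemma linear_inner_self_bounded:
  fixes f :: "'a::euclidean_space \<Rightarrow> 'a"
  assumes "linear f"
  obtains B where "\<And>z. z \<bullet> f z \<le> B * (z \<bullet> z)"
proof -
  obtain B where B: "\<And>z. norm (f z) \<le> B * norm z"
    using linear_bounded_pos[OF assms] by blast
  have "z \<bullet> f z \<le> B * (z \<bullet> z)" for z
  proof -
    have "z \<bullet> f z \<le> norm z * (B * norm z)"
      using norm_cauchy_schwarz[of z "f z"] B[of z] by (meson mult_left_mono norm_ge_zero order_trans)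
    then show ?thesis
      by (simp add: power2_eq_square mult.left_commute flip: power2_norm_eq_inner)
  qed
  then show thesis by (rule that)
qed

context
  fixes f :: "'a::euclidean_space \<Rightarrow> 'a"
  assumes lin: "linear f" and sym: "\<And>u v. f u \<bullet> v = u \<bullet> f v"
begin

lemma trust_region_objective_add:
  "trust_region_objective f r (y + e) = trust_region_objective f r y + e \<bullet> f e + 2 * (e \<bullet> (f y + r))"
proof -
  have "y \<bullet> f e = e \<bullet> f y" using sym[of e y] by (simp add: inner_commute)
  then show ?thesis
    by (simp add: trust_region_objective_def linear_add[OF lin] inner_add_left inner_add_right
        algebra_simps)
qed

lemma trust_region_objective_diff:
  assumes "trust_region_stationary V f r \<gamma> \<mu> x" and "w \<in> V" and "norm w = \<gamma>"
  shows "trust_region_objective f r w - trust_region_objective f r x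
       = (w - x) \<bullet> f (w - x) - \<mu> * ((w - x) \<bullet> (w - x))"
proof -
  define d where "d = w - x"
  have "w \<bullet> (f x - \<mu> *\<^sub>R x + r) = 0" "x \<bullet> (f x - \<mu> *\<^sub>R x + r) = 0"
    using assms by (auto simp: trust_region_stationary_def)
  then have "d \<bullet> (f x + r) = \<mu> * (d \<bullet> x)"
    by (simp add: d_def inner_diff_left inner_diff_right inner_add_right algebra_simps)
  moreover have "w \<bullet> w = x \<bullet> x"
    using assms by (simp add: trust_region_stationary_def flip: power2_norm_eq_inner)
  then have "2 * (d \<bullet> x) = - (d \<bullet> d)"
    by (simp add: d_def inner_diff_left inner_diff_right inner_commute)
  ultimately have "2 * (d \<bullet> (f x + r)) = - \<mu> * (d \<bullet> d)"
    by (metis mult.left_commute mult_minus_right mult_minus_left)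
  moreover have "trust_region_objective f r w
      = trust_region_objective f r x + d \<bullet> f d + 2 * (d \<bullet> (f x + r))"
    using trust_region_objective_add[of r x d] by (simp add: d_def)
  ultimately show ?thesis
    unfolding d_def[symmetric] by simp
qed

lemma trust_region_minimizer_reflection:
  assumes V: "subspace V" and ws: "ws \<in> V" "norm ws = \<gamma>"
    and min: "\<And>w. w \<in> V \<Longrightarrow> norm w = \<gamma>
                 \<Longrightarrow> trust_region_objective f r ws \<le> trust_region_objective f r w"
    and z: "z \<in> V"
  shows "(z \<bullet> ws) * (z \<bullet> z) * (z \<bullet> (f ws + r)) \<le> (z \<bullet> ws)\<^sup>2 * (z \<bullet> f z)"
proof (cases "z = 0")
  case True
  then show ?thesis by simp
next
  case False
  \<comment> \<open>\<open>ws + a z\<close> is the reflection of \<open>ws\<close> in the hyperplane orthogonal to \<open>z\<close>.\<close>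
  define a where "a = - 2 * (z \<bullet> ws) / (z \<bullet> z)"
  have za: "z \<bullet> ws = - a * (z \<bullet> z) / 2"
    using False by (simp add: a_def)
  have "(ws + a *\<^sub>R z) \<bullet> (ws + a *\<^sub>R z) = ws \<bullet> ws + a * (2 * (z \<bullet> ws) + a * (z \<bullet> z))"
    by (simp add: inner_add_left inner_add_right inner_commute algebra_simps)
  then have "norm (ws + a *\<^sub>R z) = \<gamma>"
    using ws(2) za by (simp add: norm_eq_sqrt_inner)
  then have "0 \<le> (a *\<^sub>R z) \<bullet> f (a *\<^sub>R z) + 2 * ((a *\<^sub>R z) \<bullet> (f ws + r))"
    using min[of "ws + a *\<^sub>R z"] trust_region_objective_add[of r ws "a *\<^sub>R z"] V ws(1) z
    by (simp add: subspace_add subspace_scale)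
  then have "0 \<le> (z \<bullet> z)\<^sup>2 * (a * (a * (z \<bullet> f z)) + a * (2 * (z \<bullet> (f ws + r))))"
    by (simp add: linear_scale[OF lin])
  also have "\<dots> = 4 * ((z \<bullet> ws)\<^sup>2 * (z \<bullet> f z) - (z \<bullet> ws) * (z \<bullet> z) * (z \<bullet> (f ws + r)))"
    unfolding za by (simp add: power2_eq_square algebra_simps)
  finally show ?thesis by simp
qed

lemma trust_region_minimizer_orthogonal:
  assumes V: "subspace V" and \<gamma>: "\<gamma> > 0" and ws: "ws \<in> V" "norm ws = \<gamma>"
    and min: "\<And>w. w \<in> V \<Longrightarrow> norm w = \<gamma>
                 \<Longrightarrow> trust_region_objective f r ws \<le> trust_region_objective f r w"
    and u: "u \<in> V" "u \<bullet> ws = 0"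
  shows "u \<bullet> (f ws + r) = 0"
proof -
  obtain B where B: "\<And>z. z \<bullet> f z \<le> B * (z \<bullet> z)"
    using linear_inner_self_bounded[OF lin] by blast
  have "ws \<bullet> (f ws + r) + t * (u \<bullet> (f ws + r)) \<le> \<gamma>\<^sup>2 * B" for t
  proof -
    define z where "z = ws + t *\<^sub>R u"
    have "z \<in> V" using V ws(1) u(1) by (simp add: z_def subspace_add subspace_scale)
    have zws: "z \<bullet> ws = \<gamma>\<^sup>2"
      using u(2) ws(2) by (simp add: z_def inner_add_left flip: power2_norm_eq_inner)
    have pos: "0 < \<gamma>\<^sup>2 * (z \<bullet> z)"
      using \<gamma> zws by (metis inner_gt_zero_iff inner_zero_left mult_pos_pos zero_less_power)
    have "\<gamma>\<^sup>2 * (z \<bullet> z) * (z \<bullet> (f ws + r)) \<le> \<gamma>\<^sup>2 * \<gamma>\<^sup>2 * (z \<bullet> f z)"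
      using trust_region_minimizer_reflection[OF V ws min \<open>z \<in> V\<close>] zws
      by (simp add: power2_eq_square)
    also have "\<dots> \<le> \<gamma>\<^sup>2 * (z \<bullet> z) * (\<gamma>\<^sup>2 * B)"
      using mult_left_mono[OF B[of z], of "\<gamma>\<^sup>2 * \<gamma>\<^sup>2"] by (simp add: algebra_simps)
    finally have "z \<bullet> (f ws + r) \<le> \<gamma>\<^sup>2 * B"
      using pos by (simp add: mult_le_cancel_left_pos)
    then show ?thesis
      by (simp add: z_def inner_add_left)
  qed
  then show ?thesis by (rule slope_eq_0_if_bounded_above)
qed

lemma trust_region_minimizer_stationary:
  assumes V: "subspace V" and \<gamma>: "\<gamma> > 0" and ws: "ws \<in> V" "norm ws = \<gamma>"
    and min: "\<And>w. w \<in> V \<Longrightarrow> norm w = \<gamma>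
                 \<Longrightarrow> trust_region_objective f r ws \<le> trust_region_objective f r w"
  shows "trust_region_stationary V f r \<gamma> ((ws \<bullet> (f ws + r)) / \<gamma>\<^sup>2) ws"
  unfolding trust_region_stationary_def
proof (intro conjI ballI)
  fix z assume "z \<in> V"
  define u where "u = z - ((z \<bullet> ws) / \<gamma>\<^sup>2) *\<^sub>R ws"
  have "u \<in> V" using V ws(1) \<open>z \<in> V\<close> by (simp add: u_def subspace_diff subspace_scale)
  moreover have "u \<bullet> ws = 0"
    using ws(2) \<gamma> by (simp add: u_def inner_diff_left flip: power2_norm_eq_inner)
  ultimately have "u \<bullet> (f ws + r) = 0"
    using trust_region_minimizer_orthogonal[OF V \<gamma> ws min] by blast
  then show "z \<bullet> (f ws - ((ws \<bullet> (f ws + r)) / \<gamma>\<^sup>2) *\<^sub>R ws + r) = 0"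
    by (simp add: u_def inner_diff_left inner_diff_right inner_add_right inner_commute
        algebra_simps)
qed (use ws in auto)

lemma trust_region_minimizer_second_order:
  assumes V: "subspace V" and stat: "trust_region_stationary V f r \<gamma> lam ws" and \<gamma>: "\<gamma> > 0"
    and min: "\<And>w. w \<in> V \<Longrightarrow> norm w = \<gamma>
                 \<Longrightarrow> trust_region_objective f r ws \<le> trust_region_objective f r w"
    and z: "z \<in> V"
  shows "lam * (z \<bullet> z) \<le> z \<bullet> f z"
proof -
  define Q where "Q y = y \<bullet> f y - lam * (y \<bullet> y)" for y
  have ws: "ws \<in> V" "norm ws = \<gamma>" using stat by (auto simp: trust_region_stationary_def)
  have Q_nonneg: "0 \<le> Q y" if y: "y \<in> V" "y \<bullet> ws \<noteq> 0" for y
  proof -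
    have "y \<bullet> (f ws + r) = lam * (y \<bullet> ws)"
      using stat y(1) by (auto simp: trust_region_stationary_def inner_diff_right inner_add_right)
    then have "0 \<le> (y \<bullet> ws)\<^sup>2 * Q y"
      using trust_region_minimizer_reflection[OF V ws min y(1)]
      by (simp add: Q_def power2_eq_square algebra_simps)
    then show ?thesis using y(2) by (simp add: zero_le_mult_iff)
  qed
  have Q_parallelogram: "Q (y + s *\<^sub>R ws) + Q (y - s *\<^sub>R ws) = 2 * Q y + 2 * s\<^sup>2 * Q ws" for y s
    using sym[of y ws] sym[of ws y]
    by (simp add: Q_def linear_add[OF lin] linear_diff[OF lin] linear_scale[OF lin] inner_add_left
        inner_add_right inner_diff_left inner_diff_right inner_commute power2_eq_square algebra_simps)
  have "0 \<le> Q z"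
  proof (cases "z \<bullet> ws = 0")
    case False
    then show ?thesis using Q_nonneg z by blast
  next
    case True
    \<comment> \<open>Then \<open>z \<plusminus> s ws\<close> are not orthogonal to \<open>ws\<close>; let \<open>s\<close> tend to \<open>0\<close>.\<close>
    have "ws \<bullet> ws \<noteq> 0" using ws(2) \<gamma> by auto
    show ?thesis
    proof (rule nonneg_if_ge_neg_square_multiple)
      fix s :: real assume "s > 0"
      then have "0 \<le> Q (z + s *\<^sub>R ws)" "0 \<le> Q (z - s *\<^sub>R ws)"
        using True \<open>ws \<bullet> ws \<noteq> 0\<close> V ws(1) z
        by (auto intro!: Q_nonneg subspace_add subspace_diff subspace_scale
            simp: inner_add_left inner_diff_left)
      then show "- (s\<^sup>2 * Q ws) \<le> Q z" using Q_parallelogram[of z s] by linarith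
    qed
  qed
  then show ?thesis by (simp add: Q_def)
qed

theorem trust_region_least_multiplier_optimal:
  assumes V: "subspace V" and \<gamma>: "\<gamma> > 0"
    and x: "trust_region_stationary V f r \<gamma> \<mu> x"
    and least: "\<And>lam y. trust_region_stationary V f r \<gamma> lam y \<Longrightarrow> \<mu> \<le> lam"
    and w: "w \<in> V" "norm w = \<gamma>"
  shows "trust_region_objective f r x \<le> trust_region_objective f r w"
proof -
  have "compact (V \<inter> sphere 0 \<gamma>)"
    using V by (simp add: closed_Int_compact closed_subspace)
  moreover have "continuous_on (V \<inter> sphere 0 \<gamma>) (trust_region_objective f r)"
    unfolding trust_region_objective_def using lin
    by (intro continuous_intros linear_continuous_on) (simp add: linear_conv_bounded_linear)
  moreover have "V \<inter> sphere 0 \<gamma> \<noteq> {}"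
    using w by auto
  ultimately obtain ws where "ws \<in> V \<inter> sphere 0 \<gamma>"
    and "\<forall>y \<in> V \<inter> sphere 0 \<gamma>. trust_region_objective f r ws \<le> trust_region_objective f r y"
    by (meson continuous_attains_inf)
  then have ws: "ws \<in> V" "norm ws = \<gamma>"
    and min: "\<And>y. y \<in> V \<Longrightarrow> norm y = \<gamma>
                 \<Longrightarrow> trust_region_objective f r ws \<le> trust_region_objective f r y"
    by auto
  define lam where "lam = (ws \<bullet> (f ws + r)) / \<gamma>\<^sup>2"
  have stat: "trust_region_stationary V f r \<gamma> lam ws"
    unfolding lam_def using trust_region_minimizer_stationary[OF V \<gamma> ws min] .
  have "w - x \<in> V"
    using V w(1) x by (simp add: subspace_diff trust_region_stationary_def)
  then have "lam * ((w - x) \<bullet> (w - x)) \<le> (w - x) \<bullet> f (w - x)"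
    using trust_region_minimizer_second_order[OF V stat \<gamma> min] by blast
  moreover have "\<mu> * ((w - x) \<bullet> (w - x)) \<le> lam * ((w - x) \<bullet> (w - x))"
    using least[OF stat] by (simp add: mult_right_mono)
  ultimately show ?thesis
    using trust_region_objective_diff[OF x w] by linarith
qed

end

section \<open>The Lanczos process\<close>

text \<open>The unnormalised vector \<open>q\<^sub>j\<^sub>+\<^sub>2\<close>; the coefficient \<open>\<alpha>\<^sub>i\<close> is \<^term>\<open>Tent M r i i\<close>.\<close>
definition lanczos_residual :: "real^'n^'n \<Rightarrow> real^'n \<Rightarrow> nat \<Rightarrow> real^'n" where
  "lanczos_residual M r j = M *v lq M r (Suc j) - Tent M r (Suc j) (Suc j) *\<^sub>R lq M r (Suc j)
     - lbeta M r (Suc j) *\<^sub>R lq M r j"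

lemma lanczos_step_eq: "lanczos_step M r j = (lq M r j, lq M r (Suc j), lbeta M r (Suc j))"
proof -
  have "fst (lanczos_step M r j) = lq M r j"
    by (induction j) (auto simp: Let_def split: prod.split)
  moreover have "lanczos_step M r j
      = (fst (lanczos_step M r j), fst (snd (lanczos_step M r j)), snd (snd (lanczos_step M r j)))"
    by simp
  ultimately show ?thesis
    by (simp only: lq.simps(2)[symmetric] lbeta.simps(2)[symmetric])
qed

lemma lq_1: "lq M r (Suc 0) = (1 / norm r) *\<^sub>R r"
  and lbeta_1: "lbeta M r (Suc 0) = norm r"
  by simp_all

declare lq.simps(2) [simp del] lbeta.simps(2) [simp del]

lemma lq_Suc_Suc:
  "lq M r (Suc (Suc j)) = (1 / lbeta M r (Suc (Suc j))) *\<^sub>R lanczos_residual M r j"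
  and lbeta_Suc_Suc: "lbeta M r (Suc (Suc j)) = norm (lanczos_residual M r j)"
  by (simp_all only: lq.simps(2) lbeta.simps(2) lanczos_step.simps(2))
    (simp_all add: lanczos_step_eq lanczos_residual_def Tent_def Let_def)

lemma lbeta_scaleR_lq_1: "lbeta M r (Suc 0) *\<^sub>R lq M r (Suc 0) = r"
  by (cases "r = 0") (auto simp: lq_1 lbeta_1)

lemma lbeta_scaleR_lq_Suc_Suc:
  "lbeta M r (Suc (Suc j)) *\<^sub>R lq M r (Suc (Suc j)) = lanczos_residual M r j"
  by (cases "lanczos_residual M r j = 0") (auto simp: lq_Suc_Suc lbeta_Suc_Suc)

lemma norm_lq: "lbeta M r (Suc j) \<noteq> 0 \<Longrightarrow> norm (lq M r (Suc j)) = 1"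
  by (cases j) (auto simp: lq_1 lbeta_1 lq_Suc_Suc lbeta_Suc_Suc)

lemma lanczos_three_term:
  "M *v lq M r (Suc j) = lbeta M r (Suc (Suc j)) *\<^sub>R lq M r (Suc (Suc j))
     + Tent M r (Suc j) (Suc j) *\<^sub>R lq M r (Suc j) + lbeta M r (Suc j) *\<^sub>R lq M r j"
  by (simp add: lbeta_scaleR_lq_Suc_Suc lanczos_residual_def)

lemma lanczos_orthogonal_step:
  assumes sym: "\<And>u v. (M *v u) \<bullet> v = u \<bullet> (M *v v)"
    and nz: "lbeta M r (Suc (Suc j)) \<noteq> 0"
    and IH: "\<And>a b. a \<le> Suc j \<Longrightarrow> b \<le> Suc j
               \<Longrightarrow> lq M r a \<bullet> lq M r b = (if a = b \<and> a \<noteq> 0 then 1 else 0)"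
    and a: "a \<le> Suc j"
  shows "lq M r a \<bullet> lq M r (Suc (Suc j)) = 0"
proof -
  let ?q = "lq M r" and ?\<beta> = "lbeta M r"
  have "?\<beta> (Suc (Suc j)) * (?q a \<bullet> ?q (Suc (Suc j))) = ?q a \<bullet> lanczos_residual M r j"
    by (simp flip: lbeta_scaleR_lq_Suc_Suc)
  also have "\<dots> = 0"
  proof (cases a)
    case 0
    then show ?thesis by simp
  next
    case (Suc c)
    have "?q a \<bullet> (M *v ?q (Suc j))
        = (if a = Suc j then Tent M r (Suc j) (Suc j) else if a = j then ?\<beta> (Suc j) else 0)"
    proof (cases "a = Suc j")
      case True
      then show ?thesis by (simp add: Tent_def)
    next
      case False
      then have "c < j" using a Suc by simp
      have "?q a \<bullet> (M *v ?q (Suc j)) = (M *v ?q (Suc c)) \<bullet> ?q (Suc j)"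
        by (simp add: sym Suc)
      also have "\<dots> = (if a = j then ?\<beta> (Suc j) else 0)"
        using \<open>c < j\<close> Suc by (simp add: lanczos_three_term inner_add_left IH)
      finally show ?thesis using False by simp
    qed
    then show ?thesis
      using a Suc by (simp add: lanczos_residual_def inner_diff_right IH)
  qed
  finally show ?thesis using nz by simp
qed

lemma lanczos_orthonormal:
  assumes sym: "\<And>u v. (M *v u) \<bullet> v = u \<bullet> (M *v v)"
    and nz: "\<And>j. 1 \<le> j \<Longrightarrow> j \<le> k \<Longrightarrow> lbeta M r j \<noteq> 0"
    and "a \<le> k" "b \<le> k"
  shows "lq M r a \<bullet> lq M r b = (if a = b \<and> a \<noteq> 0 then 1 else 0)"
proof -
  have "\<forall>a\<le>n. \<forall>b\<le>n. lq M r a \<bullet> lq M r b = (if a = b \<and> a \<noteq> 0 then 1 else 0)" if "n \<le> k" for n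
    using that
  proof (induction n)
    case 0
    then show ?case by simp
  next
    case (Suc n)
    then have IH: "lq M r a \<bullet> lq M r b = (if a = b \<and> a \<noteq> 0 then 1 else 0)"
      if "a \<le> n" "b \<le> n" for a b
      using that by simp
    have "lq M r (Suc n) \<bullet> lq M r (Suc n) = 1"
      using norm_lq[OF nz[of "Suc n"]] Suc.prems by (simp flip: power2_norm_eq_inner)
    moreover have "lq M r a \<bullet> lq M r (Suc n) = 0" if "a \<le> n" for a
    proof (cases n)
      case 0
      with that show ?thesis by simp
    next
      case (Suc j)
      then show ?thesis
        using lanczos_orthogonal_step[OF sym nz IH] that Suc.prems \<open>Suc n \<le> k\<close> by simp
    qed
    ultimately show ?case
      using IH by (auto simp: le_Suc_eq inner_commute)
  qed
  then show ?thesis using assms(3,4) by (meson nat_le_linear order_trans)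
qed

lemma lbeta_nonzero_le_kmax:
  assumes "1 \<le> j" and "j \<le> kmax M r"
  shows "lbeta M r j \<noteq> 0"
proof -
  obtain i where "j = Suc i" "i < kmax M r" using assms by (cases j) auto
  then show ?thesis
    unfolding kmax_def using not_less_Least by blast
qed

lemma krylov_mono: "j \<le> j' \<Longrightarrow> krylov M r j \<subseteq> krylov M r j'"
  unfolding krylov_def by (intro span_mono image_mono) auto

lemma matrix_vector_mult_krylov: "y \<in> krylov M r j \<Longrightarrow> M *v y \<in> krylov M r (Suc j)"
proof -
  assume "y \<in> krylov M r j"
  then have "M *v y \<in> (*v) M ` krylov M r j" by blast
  also have "\<dots> = span ((*v) M ` (\<lambda>i. ((*v) M ^^ i) r) ` {..<j})"
    unfolding krylov_def by (rule linear_span_image[OF matrix_vector_mul_linear, symmetric])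
  also have "\<dots> \<subseteq> krylov M r (Suc j)"
    unfolding krylov_def image_image
    by (intro span_mono) (auto intro!: image_eqI[where x = "Suc _"])
  finally show ?thesis .
qed

lemma lq_in_krylov: "lq M r j \<in> krylov M r j"
proof (induction j rule: induct_nat_012)
  case 0
  then show ?case by (simp add: krylov_def span_zero)
next
  case 1
  then show ?case by (simp add: lq_1 krylov_def span_base span_scale)
next
  case (ge2 j)
  have "lq M r (Suc j) \<in> krylov M r (Suc (Suc j))" "lq M r j \<in> krylov M r (Suc (Suc j))"
    using ge2 krylov_mono[of j "Suc (Suc j)" M r] krylov_mono[of "Suc j" "Suc (Suc j)" M r]
    by auto
  moreover have "M *v lq M r (Suc j) \<in> krylov M r (Suc (Suc j))"
    by (rule matrix_vector_mult_krylov[OF ge2(2)])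
  ultimately show ?case
    unfolding lq_Suc_Suc lanczos_residual_def krylov_def
    by (intro span_scale span_diff) auto
qed

lemma krylov_power_in_span_lq: "((*v) M ^^ i) r \<in> span (lq M r ` {1..Suc i})"
proof (induction i)
  case 0
  have "r = lbeta M r (Suc 0) *\<^sub>R lq M r (Suc 0)" by (simp only: lbeta_scaleR_lq_1)
  also have "\<dots> \<in> span (lq M r ` {1..Suc 0})" by (intro span_scale span_base) auto
  finally show ?case by simp
next
  case (Suc i)
  have "M *v lq M r l \<in> span (lq M r ` {1..Suc (Suc i)})" if l: "l \<in> {1..Suc i}" for l
  proof -
    obtain c where c: "l = Suc c" "c \<le> i" using l by (cases l) auto
    have "lq M r c \<in> span (lq M r ` {1..Suc (Suc i)})"
      using c by (cases c) (auto simp: span_zero intro: span_base)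
    then show ?thesis
      unfolding c lanczos_three_term using c
      by (intro span_add span_scale) (auto intro: span_base)
  qed
  then have "span ((*v) M ` lq M r ` {1..Suc i}) \<subseteq> span (lq M r ` {1..Suc (Suc i)})"
    by (intro span_minimal) auto
  then have "(*v) M ` span (lq M r ` {1..Suc i}) \<subseteq> span (lq M r ` {1..Suc (Suc i)})"
    by (simp add: linear_span_image[OF matrix_vector_mul_linear])
  then show ?case using Suc by auto
qed

lemma krylov_eq_span_lq: "krylov M r k = span (lq M r ` {1..k})"
proof
  show "krylov M r k \<subseteq> span (lq M r ` {1..k})"
    unfolding krylov_def
  proof (intro span_minimal subsetI)
    fix z assume "z \<in> (\<lambda>j. ((*v) M ^^ j) r) ` {..<k}"
    then obtain i where "i < k" "z = ((*v) M ^^ i) r" by auto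
    moreover have "span (lq M r ` {1..Suc i}) \<subseteq> span (lq M r ` {1..k})"
      using \<open>i < k\<close> by (intro span_mono image_mono) auto
    ultimately show "z \<in> span (lq M r ` {1..k})"
      using krylov_power_in_span_lq by blast
  qed auto
  show "span (lq M r ` {1..k}) \<subseteq> krylov M r k"
    using lq_in_krylov krylov_mono unfolding krylov_def
    by (intro span_minimal) (fastforce intro: subspace_span)+
qed

section \<open>Lanczos coordinates and rLGopt\<close>

lemma lq_inner_M_Qmul: "lq M r i \<bullet> (M *v Qmul M r k c) = (\<Sum>j=1..k. Tent M r i j * c j)"
  by (simp add: Qmul_def Tent_def vec.sum matrix_vector_mult_scaleR inner_sum_right mult.commute)

lemma Qmul_in_span: "Qmul M r k c \<in> span (lq M r ` {1..k})"
  unfolding Qmul_def by (intro span_sum span_scale span_base) auto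

context
  fixes M :: "real^'n^'n" and r :: "real^'n" and k :: nat
  assumes sym: "\<And>u v. (M *v u) \<bullet> v = u \<bullet> (M *v v)"
    and nz: "\<And>j. 1 \<le> j \<Longrightarrow> j \<le> k \<Longrightarrow> lbeta M r j \<noteq> 0"
begin

lemma lq_inner_lq: "i \<in> {1..k} \<Longrightarrow> j \<in> {1..k} \<Longrightarrow> lq M r i \<bullet> lq M r j = (if i = j then 1 else 0)"
  using lanczos_orthonormal[OF sym nz] by auto

lemma Qmul_inner_lq: "i \<in> {1..k} \<Longrightarrow> Qmul M r k c \<bullet> lq M r i = c i"
  by (simp add: Qmul_def inner_sum_left lq_inner_lq if_distrib[of "(*) _"] cong: if_cong)

lemma Qmul_inner_self: "Qmul M r k c \<bullet> Qmul M r k c = (\<Sum>j=1..k. (c j)\<^sup>2)"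
  by (subst (2) Qmul_def) (simp add: inner_sum_right Qmul_inner_lq power2_eq_square)

lemma Qmul_coordinates:
  assumes "y \<in> span (lq M r ` {1..k})"
  shows "Qmul M r k (\<lambda>j. y \<bullet> lq M r j) = y"
proof -
  define e where "e = y - Qmul M r k (\<lambda>j. y \<bullet> lq M r j)"
  have "e \<in> span (lq M r ` {1..k})"
    unfolding e_def using assms Qmul_in_span by (rule span_diff)
  moreover have "orthogonal e q" if "q \<in> lq M r ` {1..k}" for q
    using that by (auto simp: e_def orthogonal_def inner_diff_left Qmul_inner_lq)
  ultimately have "orthogonal e e"
    by (meson orthogonal_commute orthogonal_to_span)
  then show ?thesis by (simp add: e_def orthogonal_def)
qed

lemma lq_inner_r:
  assumes "i \<in> {1..k}"
  shows "lq M r i \<bullet> r = (if i = 1 then norm r else 0)"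
proof -
  have "lq M r i \<bullet> r = lbeta M r 1 * (lq M r i \<bullet> lq M r 1)"
    using arg_cong[OF lbeta_scaleR_lq_1, of "\<lambda>v. lq M r i \<bullet> v" M r] by simp
  then show ?thesis
    using assms by (simp add: lq_inner_lq lbeta_1)
qed

lemma lq_inner_stationarity_residual:
  assumes "i \<in> {1..k}"
  shows "lq M r i \<bullet> (M *v Qmul M r k c - lam *\<^sub>R Qmul M r k c + r)
       = (\<Sum>j=1..k. Tent M r i j * c j) - lam * c i + (if i = 1 then norm r else 0)"
  using assms by (simp add: inner_diff_right inner_add_right lq_inner_M_Qmul lq_inner_r
      inner_commute[of "lq M r i" "Qmul M r k c"] Qmul_inner_lq)

lemma rLG_feasible_imp_stationary:
  assumes "rLG_feasible M r g k lam c"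
  shows "trust_region_stationary (krylov M r k) ((*v) M) r g lam (Qmul M r k c)"
  unfolding trust_region_stationary_def krylov_eq_span_lq
proof (intro conjI ballI)
  show "Qmul M r k c \<in> span (lq M r ` {1..k})" by (rule Qmul_in_span)
  show "norm (Qmul M r k c) = g"
    using assms by (simp add: rLG_feasible_def norm_eq_sqrt_inner Qmul_inner_self)
  fix z assume z: "z \<in> span (lq M r ` {1..k})"
  let ?res = "M *v Qmul M r k c - lam *\<^sub>R Qmul M r k c + r"
  have "orthogonal ?res q" if q: "q \<in> lq M r ` {1..k}" for q
  proof -
    obtain i where i: "i \<in> {1..k}" "q = lq M r i" using q by auto
    have "(\<Sum>j=1..k. Tent M r i j * c j) - lam * c i = - norm r * (if i = 1 then 1 else 0)"
      using assms i(1) by (simp add: rLG_feasible_def)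
    then have "q \<bullet> ?res = 0"
      unfolding i(2) lq_inner_stationarity_residual[OF i(1)] by simp
    then show ?thesis by (simp add: orthogonal_def inner_commute)
  qed
  then have "orthogonal ?res z" by (rule orthogonal_to_span[OF z])
  then show "z \<bullet> ?res = 0" by (simp add: orthogonal_def inner_commute)
qed

lemma stationary_imp_rLG_feasible:
  assumes "trust_region_stationary (krylov M r k) ((*v) M) r g lam y"
  shows "rLG_feasible M r g k lam (\<lambda>j. y \<bullet> lq M r j)"
proof -
  let ?c = "\<lambda>j. y \<bullet> lq M r j"
  have y: "y \<in> span (lq M r ` {1..k})" "norm y = g"
    and orth: "\<And>z. z \<in> span (lq M r ` {1..k}) \<Longrightarrow> z \<bullet> (M *v y - lam *\<^sub>R y + r) = 0"
    using assms by (auto simp: trust_region_stationary_def krylov_eq_span_lq)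
  have y_eq: "Qmul M r k ?c = y" by (rule Qmul_coordinates[OF y(1)])
  have "(\<Sum>j=1..k. Tent M r i j * ?c j) - lam * ?c i = - norm r * (if i = 1 then 1 else 0)"
    if "i \<in> {1..k}" for i
    using lq_inner_stationarity_residual[OF that, of ?c lam, unfolded y_eq] orth[of "lq M r i"] that
    by (cases "i = 1") (auto simp: span_base)
  moreover have "sqrt (\<Sum>j=1..k. (?c j)\<^sup>2) = g"
    using Qmul_inner_self[of ?c] y(2) by (simp add: y_eq norm_eq_sqrt_inner)
  ultimately show ?thesis by (simp add: rLG_feasible_def)
qed

lemma rLG_minimizer_least_multiplier:
  assumes "rLG_minimizer M r g k \<mu> x"
  shows "trust_region_stationary (krylov M r k) ((*v) M) r g \<mu> (Qmul M r k x)"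
    and "\<And>lam y. trust_region_stationary (krylov M r k) ((*v) M) r g lam y \<Longrightarrow> \<mu> \<le> lam"
proof -
  show "trust_region_stationary (krylov M r k) ((*v) M) r g \<mu> (Qmul M r k x)"
    using assms rLG_feasible_imp_stationary by (simp add: rLG_minimizer_def)
  show "\<mu> \<le> lam" if "trust_region_stationary (krylov M r k) ((*v) M) r g lam y" for lam y
    using assms stationary_imp_rLG_feasible[OF that] unfolding rLG_minimizer_def by blast
qed

end

section \<open>Reduction to the Krylov space\<close>

lemma norm_add_orthogonal_eq_1_iff:
  assumes "orthogonal n y" and "norm n < 1"
  shows "norm (n + y) = 1 \<longleftrightarrow> norm y = sqrt (1 - (norm n)\<^sup>2)"
proof -
  have n2: "(norm n)\<^sup>2 \<le> 1"
    using assms(2) by (simp add: power_le_one less_imp_le del: power_le_one_iff)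
  have "norm (n + y) = 1 \<longleftrightarrow> (norm (n + y))\<^sup>2 = 1\<^sup>2"
    using power2_eq_iff_nonneg[of "norm (n + y)" 1] by simp
  also have "\<dots> \<longleftrightarrow> (norm y)\<^sup>2 = (sqrt (1 - (norm n)\<^sup>2))\<^sup>2"
    using norm_add_Pythagorean[OF assms(1)] assms(2) by (auto simp: abs_square_less_1 less_imp_le)
  also have "\<dots> \<longleftrightarrow> norm y = sqrt (1 - (norm n)\<^sup>2)"
    by (rule power2_eq_iff_nonneg) (simp_all add: n2)
  finally show ?thesis .
qed

locale symmetric_projector =
  fixes P :: "real^'n^'n"
  assumes idem: "\<And>v. P *v (P *v v) = P *v v"
    and symmetric: "\<And>u v. (P *v u) \<bullet> v = u \<bullet> (P *v v)"
begin

lemma projected_symmetric_inner: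
  assumes "transpose A = A"
  shows "((P ** A ** P) *v u) \<bullet> v = u \<bullet> ((P ** A ** P) *v v)"
  by (simp add: symmetric matrix_symmetric_inner[OF assms] flip: matrix_vector_mul_assoc)

lemma krylov_projected_fixed:
  assumes "y \<in> krylov (P ** A ** P) (P *v s) k"
  shows "P *v y = y"
proof -
  have "((*v) (P ** A ** P) ^^ j) (P *v s) \<in> {y. P *v y = y}" for j
    by (cases j) (simp_all add: idem flip: matrix_vector_mul_assoc)
  then have "krylov (P ** A ** P) (P *v s) k \<subseteq> {y. P *v y = y}"
    unfolding krylov_def
    by (intro span_minimal)
      (auto simp: subspace_def matrix_vector_right_distrib matrix_vector_mult_scaleR)
  then show ?thesis using assms by blast
qed

lemma hq_add_krylov:
  assumes "transpose A = A" and "y \<in> krylov (P ** A ** P) (P *v (A *v n)) k"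
  shows "hq A (n + y) = hq A n + trust_region_objective ((*v) (P ** A ** P)) (P *v (A *v n)) y"
proof -
  have Py: "P *v y = y" using krylov_projected_fixed[OF assms(2)] .
  have "y \<bullet> (A *v n) = y \<bullet> (P *v (A *v n))"
    using symmetric[of y "A *v n"] Py by simp
  moreover have "y \<bullet> (A *v y) = y \<bullet> ((P ** A ** P) *v y)"
    using symmetric[of y "A *v (P *v y)"] Py by (simp flip: matrix_vector_mul_assoc)
  moreover have "n \<bullet> (A *v y) = y \<bullet> (A *v n)"
    using matrix_symmetric_inner[OF assms(1), of y n] by (simp add: inner_commute)
  ultimately show ?thesis
    by (simp add: hq_def trust_region_objective_def matrix_vector_right_distrib inner_add_left
        inner_add_right)
qed

lemma norm_add_krylov_eq_1_iff:
  assumes "P *v n = 0" and "norm n < 1" and "y \<in> krylov (P ** A ** P) (P *v s) k"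
  shows "norm (n + y) = 1 \<longleftrightarrow> norm y = sqrt (1 - (norm n)\<^sup>2)"
proof (rule norm_add_orthogonal_eq_1_iff[OF _ assms(2)])
  show "orthogonal n y"
    using symmetric[of y n] assms(1) krylov_projected_fixed[OF assms(3)]
    by (simp add: orthogonal_def inner_commute)
qed

end

lemma symmetric_projector_projP:
  fixes C :: "real^'m^'n"
  assumes "rank C = CARD('m)"
  shows "symmetric_projector (projP C)"
  using projP_idem[OF assms] projP_symmetric_inner[OF assms] by unfold_locales

theorem theorem4p1:
  fixes A :: "real^'n^'n" and C :: "real^'m^'n" and b :: "real^'m"
    and k :: nat and \<mu> :: real and x :: "nat \<Rightarrow> real"
  assumes symA: "transpose A = A"
    and mn: "CARD('m) < CARD('n)"
    and rankC: "rank C = CARD('m)"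
    and n0_lt: "norm (n0vec C b) < 1"
    and b0_nz: "b0vec A C b \<noteq> 0"
    and k_pos: "1 \<le> k"
    and k_le: "k \<le> kmax (projP C ** A ** projP C) (b0vec A C b)"
    and minim: "rLG_minimizer (projP C ** A ** projP C) (b0vec A C b) (gam C b) k \<mu> x"
  shows "let M = projP C ** A ** projP C; r = b0vec A C b;
             v = n0vec C b + Qmul M r k x;
             S = {w. w \<in> (\<lambda>y. n0vec C b + y) ` krylov M r k \<and> norm w = 1}
         in hq A v \<in> hq A ` S \<and> (\<forall>w\<in>S. hq A v \<le> hq A w)"
proof -
  interpret P: symmetric_projector "projP C"
    using rankC by (rule symmetric_projector_projP)
  define M r n0 where "M = projP C ** A ** projP C" and "r = b0vec A C b" and "n0 = n0vec C b"
  let ?V = "krylov M r k" and ?F = "trust_region_objective ((*v) M) r"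
  have symM: "\<And>u v. (M *v u) \<bullet> v = u \<bullet> (M *v v)"
    unfolding M_def by (rule P.projected_symmetric_inner[OF symA])
  have nz: "\<And>j. 1 \<le> j \<Longrightarrow> j \<le> k \<Longrightarrow> lbeta M r j \<noteq> 0"
    using lbeta_nonzero_le_kmax k_le unfolding M_def r_def by (meson order_trans)
  note rLG = rLG_minimizer_least_multiplier[OF symM nz minim[folded M_def r_def]]
  have "gam C b > 0"
    using n0_lt by (simp add: gam_def abs_square_less_1)
  then have opt: "\<And>w. w \<in> ?V \<Longrightarrow> norm w = gam C b \<Longrightarrow> ?F (Qmul M r k x) \<le> ?F w"
    using trust_region_least_multiplier_optimal[OF matrix_vector_mul_linear symM _ _ rLG]
    by (simp add: krylov_def subspace_span)
  have "y \<in> ?V \<Longrightarrow> hq A (n0 + y) = hq A n0 + ?F y" for y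
    using P.hq_add_krylov[OF symA] by (simp add: M_def r_def n0_def b0vec_def)
  moreover have "y \<in> ?V \<Longrightarrow> norm (n0 + y) = 1 \<longleftrightarrow> norm y = gam C b" for y
    using P.norm_add_krylov_eq_1_iff[OF projP_n0vec[OF rankC] n0_lt]
    by (simp add: M_def r_def n0_def b0vec_def gam_def)
  moreover have "Qmul M r k x \<in> ?V" "norm (Qmul M r k x) = gam C b"
    using rLG(1) by (simp_all add: trust_region_stationary_def)
  ultimately show ?thesis
    unfolding Let_def M_def[symmetric] r_def[symmetric] n0_def[symmetric]
    using opt by force
qed

end
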